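(* Let $R=X^\dagger X\in\mathcal C_{K_0}$ with $X=\bigoplus_k(I_{\mathcal H_k}\otimes X_k)\in\mathcal A'_G$ such that exactly one $X_k$ is nonzero and it has rank one. Then $R$ is extremal in $\mathcal C_{K_0}$.
   Context: Let $\mathcal H,\mathcal K$ be finite-dimensional Hilbert spaces and $g\mapsto U_g$, $g\mapsto V_g$ unitary representations of a group $G$ on $\mathcal H$ and $\mathcal K$; $U_g^*$ is the complex conjugate in a fixed basis. Decompose $\mathcal K\otimes\mathcal H=\bigoplus_k(\mathcal H_k\otimes\mathbb C^{m_k})$ according to the equivalence classes $k$ of irreducible components of $V_g\otimes U_g^*$ (irreducible space $\mathcal H_k$, multiplicity $m_k$). The commutant $\mathcal A'_G$ consists of operators $\bigoplus_k(I_{\mathcal H_k}\otimes M_k)$. Fix $0\le K_0\le I_{\mathcal H}$ and let $\mathcal C_{K_0}=\{R\in\mathcal A'_G: R\ge0,\ \operatorname{Tr}_{\mathcal K}[R]=K_0\}$. *)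

theory Defs
  imports "Jordan_Normal_Form.DL_Rank" "Jordan_Normal_Form.Schur_Decomposition" "HOL-Algebra.Group"
begin

text \<open>Operators on finite-dimensional Hilbert spaces are complex matrices. H = C^dH, K = C^dK,
  and K (x) H = C^(dK*dH) with the Kronecker ordering: basis index a*dH + i (a<dK, i<dH).\<close>

definition kron :: "complex mat \<Rightarrow> complex mat \<Rightarrow> complex mat" where
  "kron A B = mat (dim_row A * dim_row B) (dim_col A * dim_col B)
     (\<lambda>(i,j). A $$ (i div dim_row B, j div dim_col B) * B $$ (i mod dim_row B, j mod dim_col B))"

definition ptrace_K :: "nat \<Rightarrow> nat \<Rightarrow> complex mat \<Rightarrow> complex mat" where
  "ptrace_K dK dH R = mat dH dH (\<lambda>(i,j). \<Sum>a<dK. R $$ (a*dH+i, a*dH+j))"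

definition psd :: "nat \<Rightarrow> complex mat \<Rightarrow> bool" where
  "psd n A \<longleftrightarrow> A \<in> carrier_mat n n \<and> (\<forall>v\<in>carrier_vec n. 0 \<le> (A *\<^sub>v v) \<bullet>c v)"

definition unitary_mat :: "nat \<Rightarrow> complex mat \<Rightarrow> bool" where
  "unitary_mat n A \<longleftrightarrow> A \<in> carrier_mat n n \<and> mat_adjoint A * A = 1\<^sub>m n \<and> A * mat_adjoint A = 1\<^sub>m n"

definition unitary_rep :: "('g,'b) monoid_scheme \<Rightarrow> nat \<Rightarrow> ('g \<Rightarrow> complex mat) \<Rightarrow> bool" where
  "unitary_rep G n U \<longleftrightarrow> (\<forall>g\<in>carrier G. unitary_mat n (U g)) \<and>
     (\<forall>g\<in>carrier G. \<forall>h\<in>carrier G. U (g \<otimes>\<^bsub>G\<^esub> h) = U g * U h)"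

definition irreducible_rep :: "('g,'b) monoid_scheme \<Rightarrow> nat \<Rightarrow> ('g \<Rightarrow> complex mat) \<Rightarrow> bool" where
  "irreducible_rep G n p \<longleftrightarrow> 0 < n \<and>
     (\<forall>S. S \<subseteq> carrier_vec n \<and> 0\<^sub>v n \<in> S \<and> (\<forall>v\<in>S. \<forall>w\<in>S. v + w \<in> S)
          \<and> (\<forall>c. \<forall>v\<in>S. c \<cdot>\<^sub>v v \<in> S) \<and> (\<forall>g\<in>carrier G. \<forall>v\<in>S. p g *\<^sub>v v \<in> S)
        \<longrightarrow> S = {0\<^sub>v n} \<or> S = carrier_vec n)"

definition equiv_rep :: "('g,'b) monoid_scheme \<Rightarrow> nat \<Rightarrow> ('g \<Rightarrow> complex mat) \<Rightarrow> nat \<Rightarrow> ('g \<Rightarrow> complex mat) \<Rightarrow> bool" where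
  "equiv_rep G n p n' p' \<longleftrightarrow> n = n' \<and>
     (\<exists>T\<in>carrier_mat n n. invertible_mat T \<and> (\<forall>g\<in>carrier G. T * p g = p' g * T))"

text \<open>Decomposition of V_g (x) conj(U_g) on K (x) H into inequivalent irreducible classes
  k < n, with irreducible space C^(d k), irrep p k, multiplicity m k, implemented by the unitary W:
  W^dagger (V_g (x) U_g^* ) W = (+)_k (p_k(g) (x) I_(m k)).\<close>
definition isotypic_decomp ::
  "('g,'b) monoid_scheme \<Rightarrow> nat \<Rightarrow> nat \<Rightarrow> ('g \<Rightarrow> complex mat) \<Rightarrow> ('g \<Rightarrow> complex mat)
   \<Rightarrow> nat \<Rightarrow> (nat \<Rightarrow> nat) \<Rightarrow> (nat \<Rightarrow> nat) \<Rightarrow> (nat \<Rightarrow> 'g \<Rightarrow> complex mat) \<Rightarrow> complex mat \<Rightarrow> bool" where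
  "isotypic_decomp G dK dH U V n d m p W \<longleftrightarrow>
     (\<forall>k<n. unitary_rep G (d k) (p k) \<and> irreducible_rep G (d k) (p k) \<and> 0 < m k) \<and>
     (\<forall>k<n. \<forall>l<n. k \<noteq> l \<longrightarrow> \<not> equiv_rep G (d k) (p k) (d l) (p l)) \<and>
     (\<Sum>k<n. d k * m k) = dK * dH \<and>
     unitary_mat (dK * dH) W \<and>
     (\<forall>g\<in>carrier G. mat_adjoint W * kron (V g) (map_mat cnj (U g)) * W
        = diag_block_mat (map (\<lambda>k. kron (p k g) (1\<^sub>m (m k))) [0..<n]))"

definition comm_op :: "complex mat \<Rightarrow> nat \<Rightarrow> (nat \<Rightarrow> nat) \<Rightarrow> (nat \<Rightarrow> complex mat) \<Rightarrow> complex mat" where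
  "comm_op W n d M = W * diag_block_mat (map (\<lambda>k. kron (1\<^sub>m (d k)) (M k)) [0..<n]) * mat_adjoint W"

definition commutant :: "complex mat \<Rightarrow> nat \<Rightarrow> (nat \<Rightarrow> nat) \<Rightarrow> (nat \<Rightarrow> nat) \<Rightarrow> complex mat set" where
  "commutant W n d m = {comm_op W n d M | M. \<forall>k<n. M k \<in> carrier_mat (m k) (m k)}"

definition C_set :: "nat \<Rightarrow> nat \<Rightarrow> complex mat \<Rightarrow> nat \<Rightarrow> (nat \<Rightarrow> nat) \<Rightarrow> (nat \<Rightarrow> nat) \<Rightarrow> complex mat \<Rightarrow> complex mat set" where
  "C_set dK dH W n d m K0 = {R \<in> commutant W n d m. psd (dK * dH) R \<and> ptrace_K dK dH R = K0}"

definition extremal_in :: "complex mat set \<Rightarrow> complex mat \<Rightarrow> bool" where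
  "extremal_in C R \<longleftrightarrow> R \<in> C \<and>
     (\<forall>R1\<in>C. \<forall>R2\<in>C. \<forall>t::real. 0 < t \<and> t < 1 \<and>
        R = complex_of_real t \<cdot>\<^sub>m R1 + complex_of_real (1 - t) \<cdot>\<^sub>m R2 \<longrightarrow> R1 = R \<and> R2 = R)"

end

theory Submission
  imports Defs
begin

text \<open>Write Z = (+)_k (I (x) X_k), so that R = Z^dagger Z and X_k0 = u w^dagger is the only
  nonzero block. The kernel of Z contains e (x) x for every x orthogonal to w in the summand k0 and
  all of the other summands, and the quadratic form of R vanishes there. If R is a proper convex
  combination of R1, R2 in C_K0, the same holds for R1 and R2; for an element (+)_k (I (x) M_k) of the
  commutant this forces M_k = 0 for k different from k0 and M_k0 = c w w^dagger. Hence R1 and R2 lie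
  on the ray through R, and the constraint Tr_K R_i = K0, which is nonzero since R is, fixes c.\<close>

lemma eq_0_matI:
  fixes A :: "'a :: semiring_1 mat"
  assumes A: "A \<in> carrier_mat nr nc" and zero: "\<And>x. x \<in> carrier_vec nc \<Longrightarrow> A *\<^sub>v x = 0\<^sub>v nr"
  shows "A = 0\<^sub>m nr nc"
proof (rule eq_matI)
  fix i j assume "i < dim_row (0\<^sub>m nr nc)" "j < dim_col (0\<^sub>m nr nc)"
  then have i: "i < nr" and j: "j < nc" by auto
  have "A $$ (i,j) = (A *\<^sub>v unit_vec nc j) $ i" using A i j by simp
  also have "\<dots> = 0" using zero[of "unit_vec nc j"] i by simp
  finally show "A $$ (i,j) = 0\<^sub>m nr nc $$ (i,j)" using i j by simp
qed (use A in auto)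

lemma zero_mat_mult_vec: "v \<in> carrier_vec nc \<Longrightarrow> 0\<^sub>m nr nc *\<^sub>v v = (0\<^sub>v nr :: 'a :: semiring_0 vec)"
  by (rule eq_vecI) (auto simp: scalar_prod_def)

lemma mult_mat_vec_zero: "A \<in> carrier_mat nr nc \<Longrightarrow> A *\<^sub>v 0\<^sub>v nc = (0\<^sub>v nr :: 'a :: semiring_0 vec)"
  by (rule eq_vecI) (auto simp: scalar_prod_def)

lemma smult_mat_mult_vec:
  "A \<in> carrier_mat nr nc \<Longrightarrow> v \<in> carrier_vec nc \<Longrightarrow> (c \<cdot>\<^sub>m A) *\<^sub>v v = c \<cdot>\<^sub>v (A *\<^sub>v (v :: 'a :: comm_semiring_0 vec))"
  by (rule eq_vecI) (auto simp: scalar_prod_def sum_distrib_left mult.assoc)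

lemma mat_adjoint_carrier: "A \<in> carrier_mat nr nc \<Longrightarrow> mat_adjoint A \<in> carrier_mat nc nr"
  unfolding mat_adjoint_def by auto

lemma mat_adjoint_index:
  "i < dim_col A \<Longrightarrow> j < dim_row A \<Longrightarrow> mat_adjoint A $$ (i,j) = cnj (A $$ (j,i) :: complex)"
  unfolding mat_adjoint_def by (simp add: mat_of_rows_def)

lemma cscalar_prod_mat_adjoint:
  fixes A :: "complex mat"
  assumes A: "A \<in> carrier_mat nr nc" and u: "u \<in> carrier_vec nc" and v: "v \<in> carrier_vec nr"
  shows "(A *\<^sub>v u) \<bullet>c v = u \<bullet>c (mat_adjoint A *\<^sub>v v)"
proof -
  have "(A *\<^sub>v u) \<bullet>c v = (\<Sum>i<nr. \<Sum>j<nc. A $$ (i,j) * u $ j * cnj (v $ i))"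
    using A u v unfolding mult_mat_vec_def scalar_prod_def
    by (simp add: lessThan_atLeast0 sum_distrib_right)
  also have "\<dots> = (\<Sum>j<nc. \<Sum>i<nr. A $$ (i,j) * u $ j * cnj (v $ i))"
    by (rule sum.swap)
  also have "\<dots> = u \<bullet>c (mat_adjoint A *\<^sub>v v)"
    using A u v mat_adjoint_carrier[OF A] unfolding mult_mat_vec_def scalar_prod_def
    by (simp add: lessThan_atLeast0 mat_adjoint_index sum_distrib_left algebra_simps)
  finally show ?thesis .
qed

lemma mat_adjoint_mult_self_eq_0:
  fixes Z :: "complex mat"
  assumes Z: "Z \<in> carrier_mat nr nc" and ZZ: "mat_adjoint Z * Z = 0\<^sub>m nc nc"
  shows "Z = 0\<^sub>m nr nc"
proof (rule eq_0_matI[OF Z])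
  fix x :: "complex vec" assume x: "x \<in> carrier_vec nc"
  have "(Z *\<^sub>v x) \<bullet>c (Z *\<^sub>v x) = x \<bullet>c ((mat_adjoint Z * Z) *\<^sub>v x)"
    using Z x mat_adjoint_carrier[OF Z] by (simp add: cscalar_prod_mat_adjoint[OF Z x])
  also have "\<dots> = 0" using x unfolding ZZ by (simp add: zero_mat_mult_vec)
  finally show "Z *\<^sub>v x = 0\<^sub>v nr" using conjugate_square_eq_0_vec[of "Z *\<^sub>v x" nr] Z x by auto
qed

lemma smult_mat_cancel:
  fixes A :: "'a :: field mat"
  assumes A: "A \<in> carrier_mat nr nc" and nz: "A \<noteq> 0\<^sub>m nr nc" and eq: "a \<cdot>\<^sub>m A = b \<cdot>\<^sub>m A"
  shows "a = b"
proof -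
  obtain i j where ij: "i < nr" "j < nc" "A $$ (i,j) \<noteq> 0"
    using nz A by (metis carrier_matD eq_matI index_zero_mat(1,2,3))
  have "a * A $$ (i,j) = b * A $$ (i,j)"
    using arg_cong[OF eq, of "\<lambda>B. B $$ (i,j)"] ij A by simp
  then show ?thesis using ij(3) by simp
qed

lemma conjugate_unit_vec: "conjugate (unit_vec n j) = (unit_vec n j :: complex vec)"
  by (rule eq_vecI) (auto simp: unit_vec_def)

lemma cscalar_prod_unit_vec_right: "v \<in> carrier_vec n \<Longrightarrow> j < n \<Longrightarrow> v \<bullet>c unit_vec n j = (v $ j :: complex)"
  by (simp add: conjugate_unit_vec)

lemma cscalar_prod_minus_smult_right:
  fixes v x w :: "complex vec"
  assumes "v \<in> carrier_vec n" "x \<in> carrier_vec n" "w \<in> carrier_vec n"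
  shows "v \<bullet>c (x - c \<cdot>\<^sub>v w) = v \<bullet>c x - cnj c * (v \<bullet>c w)"
  using assms unfolding scalar_prod_def
  by (simp add: lessThan_atLeast0 algebra_simps sum_subtractf sum_distrib_left)

lemma linear_coeff_zero_if_nonneg_quadratic:
  fixes p g :: real
  assumes nonneg: "\<And>e. 0 \<le> e * p + e\<^sup>2 * g" and g: "0 \<le> g"
  shows "p = 0"
proof -
  define e where "e = - p / (g + 1)"
  have E: "(g + 1) * e = - p" unfolding e_def using g by simp
  have "(g + 1)\<^sup>2 * (e * p + e\<^sup>2 * g) = (g + 1) * ((g + 1) * e) * p + ((g + 1) * e)\<^sup>2 * g"
    by (simp add: power2_eq_square algebra_simps)
  also have "\<dots> = - (p\<^sup>2)" unfolding E by (simp add: power2_eq_square algebra_simps)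
  finally have "0 \<le> - (p\<^sup>2)" using nonneg[of e] g by (metis zero_le_mult_iff zero_le_power2)
  then show "p = 0" by simp
qed

lemma quadratic_form_add_smult:
  fixes A :: "complex mat"
  assumes A: "A \<in> carrier_mat n n" and v: "v \<in> carrier_vec n" and y: "y \<in> carrier_vec n"
  shows "(A *\<^sub>v (v + s \<cdot>\<^sub>v y)) \<bullet>c (v + s \<cdot>\<^sub>v y)
    = (A *\<^sub>v v) \<bullet>c v + cnj s * ((A *\<^sub>v v) \<bullet>c y) + s * ((A *\<^sub>v y) \<bullet>c v) + s * cnj s * ((A *\<^sub>v y) \<bullet>c y)"
proof -
  have "A *\<^sub>v (v + s \<cdot>\<^sub>v y) = A *\<^sub>v v + s \<cdot>\<^sub>v (A *\<^sub>v y)"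
    using A v y by (simp add: mult_add_distrib_mat_vec mult_mat_vec)
  moreover have "conjugate (v + s \<cdot>\<^sub>v y) = conjugate v + cnj s \<cdot>\<^sub>v conjugate y"
    using v y by (simp add: conjugate_add_vec[of _ n] conjugate_smult_vec)
  ultimately show ?thesis
    using A v y
    by (simp add: add_scalar_prod_distrib[of _ n] scalar_prod_add_distrib[of _ n]
        smult_scalar_prod_distrib[of _ n] scalar_prod_smult_distrib[of _ n] algebra_simps)
qed

text \<open>The form at v + s y is nonnegative for all s; letting s run through small real and
  imaginary multiples kills both cross terms.\<close>

lemma psd_form_zero_orthogonal:
  fixes A :: "complex mat"
  assumes psd: "psd n A" and v: "v \<in> carrier_vec n" and zero: "(A *\<^sub>v v) \<bullet>c v = 0"
    and y: "y \<in> carrier_vec n"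
  shows "(A *\<^sub>v y) \<bullet>c v = 0" and "(A *\<^sub>v v) \<bullet>c y = 0"
proof -
  have A: "A \<in> carrier_mat n n" and form_nonneg: "\<And>u. u \<in> carrier_vec n \<Longrightarrow> 0 \<le> (A *\<^sub>v u) \<bullet>c u"
    using psd unfolding psd_def by auto
  define a b g where "a = (A *\<^sub>v v) \<bullet>c y" and "b = (A *\<^sub>v y) \<bullet>c v" and "g = (A *\<^sub>v y) \<bullet>c y"
  have g: "0 \<le> Re g" "Im g = 0"
    using form_nonneg[OF y] unfolding g_def by (auto simp: less_eq_complex_def)
  have perturbed: "0 \<le> cnj s * a + s * b + s * cnj s * g" for s
    using form_nonneg[of "v + s \<cdot>\<^sub>v y"] v y
    unfolding quadratic_form_add_smult[OF A v y] zero a_def b_def g_def by simp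
  have "0 \<le> e * Re (a + b) + e\<^sup>2 * Re g" for e :: real
    using perturbed[of "complex_of_real e"] by (simp add: less_eq_complex_def power2_eq_square algebra_simps)
  then have re_sum: "Re (a + b) = 0" using linear_coeff_zero_if_nonneg_quadratic g(1) by blast
  have "0 \<le> e * Im (a - b) + e\<^sup>2 * Re g" for e :: real
    using perturbed[of "\<i> * complex_of_real e"] g
    by (simp add: less_eq_complex_def power2_eq_square algebra_simps)
  then have im_diff: "Im (a - b) = 0" using linear_coeff_zero_if_nonneg_quadratic g(1) by blast
  have "Im (a + b) = 0" using perturbed[of 1] g by (simp add: less_eq_complex_def)
  moreover have "Re (a - b) = 0" using perturbed[of \<i>] g by (simp add: less_eq_complex_def algebra_simps)
  ultimately have "a = 0" "b = 0" using re_sum im_diff by (auto simp: complex_eq_iff)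
  then show "(A *\<^sub>v y) \<bullet>c v = 0" "(A *\<^sub>v v) \<bullet>c y = 0" unfolding a_def b_def by simp_all
qed

lemma psd_form_zero_imp_kernel:
  fixes A :: "complex mat"
  assumes psd: "psd n A" and v: "v \<in> carrier_vec n" and zero: "(A *\<^sub>v v) \<bullet>c v = 0"
  shows "A *\<^sub>v v = 0\<^sub>v n"
proof -
  have A: "A \<in> carrier_mat n n" using psd unfolding psd_def by auto
  then have "(A *\<^sub>v v) \<bullet>c (A *\<^sub>v v) = 0" using psd_form_zero_orthogonal(2)[OF psd v zero] v by simp
  then show ?thesis using conjugate_square_eq_0_vec[of "A *\<^sub>v v" n] A v by auto
qed

section \<open>Rank-one matrices\<close>

lemma rank_one_mat_entries:
  fixes X :: "complex mat"
  assumes X: "X \<in> carrier_mat m m" and rank: "vec_space.rank m X = 1"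
  obtains u a where "u \<in> carrier_vec m" and "\<And>i j. i < m \<Longrightarrow> j < m \<Longrightarrow> X $$ (i,j) = a j * u $ i"
proof -
  interpret V: vec_space "TYPE(complex)" m .
  have cols: "set (cols X) \<subseteq> carrier_vec m" using X cols_dim by blast
  obtain S where S: "maximal S (\<lambda>T. T \<subseteq> set (cols X) \<and> V.lin_indpt T)"
    using maximal_exists[of "\<lambda>T. T \<subseteq> set (cols X) \<and> V.lin_indpt T" "card (set (cols X))" "{}"]
    by (meson List.finite_set card_mono empty_iff empty_subsetI V.finite_lin_indpt2 rev_finite_subset)
  have "card S = 1" using V.rank_card_indpt[OF X S] rank by simp
  then obtain u where Su: "S = {u}" using card_1_singletonE by blast
  have u: "u \<in> set (cols X)" "V.lin_indpt {u}"
    and S_max: "\<And>B. {u} \<subseteq> B \<Longrightarrow> B \<subseteq> set (cols X) \<Longrightarrow> V.lin_indpt B \<Longrightarrow> B = {u}"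
    using S unfolding maximal_def Su by blast+
  have u_carrier: "u \<in> carrier_vec m" using u cols by auto
  have in_span: "c \<in> V.span {u}" if c: "c \<in> set (cols X)" for c
  proof (cases "c = u")
    case True
    then show ?thesis using V.in_own_span[of "{u}"] u_carrier by auto
  next
    case False
    have "\<not> V.lin_indpt ({u} \<union> {c})" using S_max[of "{u} \<union> {c}"] c u False by blast
    moreover have "c \<in> V.span {u} \<longleftrightarrow> V.lin_dep ({u} \<union> {c})"
      by (rule V.lin_dep_iff_in_span) (use u_carrier u c cols False in auto)
    ultimately show ?thesis by blast
  qed
  have "\<exists>aj. col X j = aj \<cdot>\<^sub>v u" if j: "j < m" for j
  proof -
    have "col X j \<in> set (cols X)" using j X by (metis cols_length cols_nth carrier_matD(2) nth_mem)
    then obtain a where a: "V.lincomb a {u} = col X j"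
      using in_span V.finite_in_span[of "{u}" "col X j"] u_carrier by auto
    have "V.lincomb a {u} = a u \<cdot>\<^sub>v u"
      by (rule eq_vecI) (use u_carrier V.lincomb_dim[of "{u}" a] V.lincomb_index[of _ "{u}" a] in auto)
    then show ?thesis using a by metis
  qed
  then obtain a where a: "\<And>j. j < m \<Longrightarrow> col X j = a j \<cdot>\<^sub>v u" by metis
  show ?thesis
  proof
    fix i j assume i: "i < m" and j: "j < m"
    have "X $$ (i,j) = col X j $ i" using i j X by auto
    then show "X $$ (i,j) = a j * u $ i" using a[OF j] i u_carrier by auto
  qed (fact u_carrier)
qed

lemma rank_one_mat_kernel:
  fixes X :: "complex mat"
  assumes X: "X \<in> carrier_mat m m" and nz: "X \<noteq> 0\<^sub>m m m" and rank: "vec_space.rank m X = 1"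
  obtains w where "w \<in> carrier_vec m" and "w \<noteq> 0\<^sub>v m"
    and "\<And>x. x \<in> carrier_vec m \<Longrightarrow> x \<bullet>c w = 0 \<Longrightarrow> X *\<^sub>v x = 0\<^sub>v m"
proof -
  obtain u a where u: "u \<in> carrier_vec m" and Xa: "\<And>i j. i < m \<Longrightarrow> j < m \<Longrightarrow> X $$ (i,j) = a j * u $ i"
    using rank_one_mat_entries[OF X rank] by blast
  define w where "w = vec m (\<lambda>j. cnj (a j))"
  have mult: "X *\<^sub>v x = (x \<bullet>c w) \<cdot>\<^sub>v u" if x: "x \<in> carrier_vec m" for x
  proof (rule eq_vecI)
    fix i assume "i < dim_vec ((x \<bullet>c w) \<cdot>\<^sub>v u)"
    then have i: "i < m" using u by simp
    have "(X *\<^sub>v x) $ i = (\<Sum>j<m. a j * u $ i * x $ j)"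
      using X x i Xa unfolding mult_mat_vec_def scalar_prod_def by (simp add: lessThan_atLeast0)
    also have "\<dots> = (x \<bullet>c w) * u $ i"
      using x unfolding w_def scalar_prod_def by (simp add: lessThan_atLeast0 sum_distrib_left sum_distrib_right algebra_simps)
    finally show "(X *\<^sub>v x) $ i = ((x \<bullet>c w) \<cdot>\<^sub>v u) $ i" using i u by simp
  qed (use X u in auto)
  have zero_smult: "0 \<cdot>\<^sub>v u = 0\<^sub>v m" using u by (auto intro: eq_vecI)
  have "w \<noteq> 0\<^sub>v m"
  proof
    assume "w = 0\<^sub>v m"
    then have "X *\<^sub>v x = 0\<^sub>v m" if "x \<in> carrier_vec m" for x
      using mult[OF that] that zero_smult by simp
    then show False using eq_0_matI[OF X] nz by blast
  qed
  then show ?thesis using that[of w] mult zero_smult unfolding w_def by simp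
qed

definition outer_mat :: "complex vec \<Rightarrow> complex mat" where
  "outer_mat w = mat (dim_vec w) (dim_vec w) (\<lambda>(i,j). w $ i * cnj (w $ j))"

lemma mat_eq_smult_outer_mat:
  fixes A :: "complex mat"
  assumes A: "A \<in> carrier_mat m m" and w: "w \<in> carrier_vec m" and w_nz: "w \<noteq> 0\<^sub>v m"
    and kernel: "\<And>x. x \<in> carrier_vec m \<Longrightarrow> x \<bullet>c w = 0 \<Longrightarrow> A *\<^sub>v x = 0\<^sub>v m"
    and range: "\<And>x y. x \<in> carrier_vec m \<Longrightarrow> y \<in> carrier_vec m \<Longrightarrow> x \<bullet>c w = 0 \<Longrightarrow> (A *\<^sub>v y) \<bullet>c x = 0"
  obtains c where "A = c \<cdot>\<^sub>m outer_mat w"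
proof -
  define wn where "wn = w \<bullet>c w"
  have wn: "wn \<noteq> 0" "cnj wn = wn"
    unfolding wn_def using w w_nz conjugate_conjugate_sprod[OF w w] conjugate_vec_sprod_comm[OF w w]
    by auto
  define coeff where "coeff x = (x \<bullet>c w) / wn" for x
  define proj where "proj x = x - coeff x \<cdot>\<^sub>v w" for x
  have proj: "proj x \<in> carrier_vec m" "proj x \<bullet>c w = 0" if x: "x \<in> carrier_vec m" for x
    using x w wn unfolding proj_def coeff_def wn_def
    by (auto simp: minus_scalar_prod_distrib[of _ m])
  have A_mult: "A *\<^sub>v x = coeff x \<cdot>\<^sub>v (A *\<^sub>v w)" if x: "x \<in> carrier_vec m" for x
  proof -
    have "x = proj x + coeff x \<cdot>\<^sub>v w" by (rule eq_vecI) (use x w in \<open>auto simp: proj_def\<close>)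
    then have "A *\<^sub>v x = A *\<^sub>v proj x + coeff x \<cdot>\<^sub>v (A *\<^sub>v w)"
      using A w proj(1)[OF x] by (metis mult_add_distrib_mat_vec mult_mat_vec smult_carrier_vec)
    then show ?thesis using kernel[OF proj[OF x]] A w by simp
  qed
  define beta where "beta = coeff (A *\<^sub>v w)"
  have Aw: "(A *\<^sub>v w) $ i = beta * w $ i" if i: "i < m" for i
  proof -
    have e: "unit_vec m i \<in> carrier_vec m" by simp
    have "0 = (A *\<^sub>v w) \<bullet>c proj (unit_vec m i)" using range[OF proj(1)[OF e] w proj(2)[OF e]] by simp
    also have "\<dots> = (A *\<^sub>v w) $ i - cnj (coeff (unit_vec m i)) * ((A *\<^sub>v w) \<bullet>c w)"
      using A w i cscalar_prod_unit_vec_right[of "A *\<^sub>v w" m i] unfolding proj_def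
      by (simp add: cscalar_prod_minus_smult_right[of _ m])
    also have "cnj (coeff (unit_vec m i)) = w $ i / wn" using w i wn unfolding coeff_def by simp
    finally show ?thesis unfolding beta_def coeff_def by (simp add: field_simps)
  qed
  have "A = (beta / wn) \<cdot>\<^sub>m outer_mat w"
  proof (rule eq_matI)
    fix i j assume "i < dim_row ((beta / wn) \<cdot>\<^sub>m outer_mat w)" "j < dim_col ((beta / wn) \<cdot>\<^sub>m outer_mat w)"
    then have i: "i < m" and j: "j < m" using w unfolding outer_mat_def by auto
    have "A $$ (i,j) = (A *\<^sub>v unit_vec m j) $ i" using A i j by simp
    also have "\<dots> = coeff (unit_vec m j) * (A *\<^sub>v w) $ i" using A_mult[of "unit_vec m j"] A w i by simp
    finally show "A $$ (i,j) = ((beta / wn) \<cdot>\<^sub>m outer_mat w) $$ (i,j)"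
      using Aw[OF i] i j w unfolding coeff_def outer_mat_def by simp
  qed (use A w in \<open>auto simp: outer_mat_def\<close>)
  then show ?thesis by (rule that)
qed

section \<open>Partial trace and extremal points\<close>

lemma mult_add_less_mult: "a < (dK::nat) \<Longrightarrow> i < dH \<Longrightarrow> a * dH + i < dK * dH"
  using mult_le_mono1[of "Suc a" dK dH] by simp

lemma ptrace_K_smult:
  assumes R: "R \<in> carrier_mat (dK * dH) (dK * dH)"
  shows "ptrace_K dK dH (c \<cdot>\<^sub>m R) = c \<cdot>\<^sub>m ptrace_K dK dH R"
  by (rule eq_matI) (use R in \<open>auto simp: ptrace_K_def sum_distrib_left mult_add_less_mult\<close>)

lemma ptrace_K_psd_eq_0:
  assumes psd: "psd (dK * dH) R" and zero: "ptrace_K dK dH R = 0\<^sub>m dH dH"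
  shows "R = 0\<^sub>m (dK * dH) (dK * dH)"
proof -
  have R: "R \<in> carrier_mat (dK * dH) (dK * dH)" using psd unfolding psd_def by auto
  have diag_nonneg: "0 \<le> R $$ (j,j)" if j: "j < dK * dH" for j
  proof -
    have "(R *\<^sub>v unit_vec (dK * dH) j) \<bullet>c unit_vec (dK * dH) j = R $$ (j,j)"
      using cscalar_prod_unit_vec_right[of "R *\<^sub>v unit_vec (dK * dH) j" "dK * dH" j] R j by simp
    then show ?thesis using psd unfolding psd_def by (metis unit_vec_carrier)
  qed
  have diag: "R $$ (j,j) = 0" if j: "j < dK * dH" for j
  proof -
    have dH: "0 < dH" using j by (cases dH) auto
    define a i where "a = j div dH" and "i = j mod dH"
    have a: "a < dK" and i: "i < dH" and j_eq: "j = a * dH + i"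
      using j dH unfolding a_def i_def by (auto simp: less_mult_imp_div_less)
    have "(\<Sum>b<dK. R $$ (b * dH + i, b * dH + i)) = 0"
      using arg_cong[OF zero, of "\<lambda>K. K $$ (i,i)"] i unfolding ptrace_K_def by simp
    moreover have "\<forall>b\<in>{..<dK}. 0 \<le> R $$ (b * dH + i, b * dH + i)"
      using diag_nonneg i mult_add_less_mult by blast
    ultimately have "\<forall>b\<in>{..<dK}. R $$ (b * dH + i, b * dH + i) = 0"
      using sum_nonneg_eq_0_iff[of "{..<dK}" "\<lambda>b. R $$ (b * dH + i, b * dH + i)"] by simp
    then show ?thesis using a j_eq by auto
  qed
  show ?thesis
  proof (rule eq_matI)
    fix r j assume "r < dim_row (0\<^sub>m (dK * dH) (dK * dH))" "j < dim_col (0\<^sub>m (dK * dH) (dK * dH))"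
    then have r: "r < dK * dH" and j: "j < dK * dH" by auto
    have "(R *\<^sub>v unit_vec (dK * dH) j) \<bullet>c unit_vec (dK * dH) j = 0"
      using cscalar_prod_unit_vec_right[of _ "dK * dH" j] R j diag[OF j] by simp
    then have "R *\<^sub>v unit_vec (dK * dH) j = 0\<^sub>v (dK * dH)"
      using psd_form_zero_imp_kernel[OF psd] by simp
    moreover have "R $$ (r,j) = (R *\<^sub>v unit_vec (dK * dH) j) $ r" using R r j by simp
    ultimately show "R $$ (r,j) = 0\<^sub>m (dK * dH) (dK * dH) $$ (r,j)" using r j by simp
  qed (use R in auto)
qed

lemma smult_eq_if_ptrace_K_eq:
  fixes Q :: "complex mat"
  assumes Q: "Q \<in> carrier_mat (dK * dH) (dK * dH)"
    and eq: "ptrace_K dK dH (a \<cdot>\<^sub>m Q) = ptrace_K dK dH (b \<cdot>\<^sub>m Q)"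
    and nz: "ptrace_K dK dH (b \<cdot>\<^sub>m Q) \<noteq> 0\<^sub>m dH dH"
  shows "a \<cdot>\<^sub>m Q = b \<cdot>\<^sub>m Q"
proof -
  have "ptrace_K dK dH Q \<noteq> 0\<^sub>m dH dH" using nz unfolding ptrace_K_smult[OF Q] by auto
  moreover have "ptrace_K dK dH Q \<in> carrier_mat dH dH" unfolding ptrace_K_def by simp
  ultimately have "a = b" using smult_mat_cancel eq unfolding ptrace_K_smult[OF Q] by blast
  then show ?thesis by simp
qed

lemma convex_comb_nonneg_eq_0:
  fixes a b :: complex and t :: real
  assumes "0 \<le> a" "0 \<le> b" "0 < t" "t < 1" "complex_of_real t * a + complex_of_real (1 - t) * b = 0"
  shows "a = 0"
proof -
  have a: "0 \<le> Re a" "Im a = 0" and b: "0 \<le> Re b" using assms(1,2) by (auto simp: less_eq_complex_def)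
  have "t * Re a + (1 - t) * Re b = 0" using arg_cong[OF assms(5), of Re] by simp
  moreover have "0 \<le> t * Re a" "0 \<le> (1 - t) * Re b" using a b assms(3,4) by simp_all
  ultimately have "t * Re a = 0" by linarith
  then show ?thesis using a assms(3) by (simp add: complex_eq_iff)
qed

text \<open>The positive semidefinite matrices whose quadratic form vanishes on S form a face of the cone.\<close>

lemma extremal_inI_psd_face:
  assumes psd: "\<And>A. A \<in> C \<Longrightarrow> psd n A" and R: "R \<in> C" and S: "S \<subseteq> carrier_vec n"
    and R_S: "\<And>v. v \<in> S \<Longrightarrow> (R *\<^sub>v v) \<bullet>c v = 0"
    and unique: "\<And>A. A \<in> C \<Longrightarrow> (\<And>v. v \<in> S \<Longrightarrow> (A *\<^sub>v v) \<bullet>c v = 0) \<Longrightarrow> A = R"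
  shows "extremal_in C R"
  unfolding extremal_in_def
proof (intro conjI[OF R] ballI allI impI)
  fix R1 R2 t assume R1: "R1 \<in> C" and R2: "R2 \<in> C"
    and comb: "0 < t \<and> t < 1 \<and> R = complex_of_real t \<cdot>\<^sub>m R1 + complex_of_real (1 - t) \<cdot>\<^sub>m R2"
  have carrier: "R1 \<in> carrier_mat n n" "R2 \<in> carrier_mat n n"
    using psd[OF R1] psd[OF R2] unfolding psd_def by auto
  have "(R1 *\<^sub>v v) \<bullet>c v = 0 \<and> (R2 *\<^sub>v v) \<bullet>c v = 0" if v: "v \<in> S" for v
  proof -
    have vc: "v \<in> carrier_vec n" using v S by auto
    have "complex_of_real t * ((R1 *\<^sub>v v) \<bullet>c v) + complex_of_real (1 - t) * ((R2 *\<^sub>v v) \<bullet>c v) = 0"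
      using R_S[OF v] comb carrier vc
      by (simp add: add_mult_distrib_mat_vec[of _ n n] smult_mat_mult_vec[of _ n n]
          add_scalar_prod_distrib[of _ n])
    moreover have "0 \<le> (R1 *\<^sub>v v) \<bullet>c v" "0 \<le> (R2 *\<^sub>v v) \<bullet>c v"
      using psd[OF R1] psd[OF R2] vc unfolding psd_def by auto
    ultimately show ?thesis
      using convex_comb_nonneg_eq_0[of _ _ t] convex_comb_nonneg_eq_0[of _ _ "1 - t"] comb
      by (simp add: add.commute)
  qed
  then show "R1 = R \<and> R2 = R" using unique R1 R2 by blast
qed

lemma extremal_in_C_set_if_face_on_ray:
  fixes R Q :: "complex mat"
  assumes R: "R \<in> C_set dK dH W n d m K0" and R_nz: "R \<noteq> 0\<^sub>m (dK * dH) (dK * dH)"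
    and S: "S \<subseteq> carrier_vec (dK * dH)" and R_S: "\<And>v. v \<in> S \<Longrightarrow> (R *\<^sub>v v) \<bullet>c v = 0"
    and Q: "Q \<in> carrier_mat (dK * dH) (dK * dH)"
    and on_ray: "\<And>A. A \<in> C_set dK dH W n d m K0 \<Longrightarrow> (\<And>v. v \<in> S \<Longrightarrow> (A *\<^sub>v v) \<bullet>c v = 0)
      \<Longrightarrow> \<exists>c. A = c \<cdot>\<^sub>m Q"
  shows "extremal_in (C_set dK dH W n d m K0) R"
proof (rule extremal_inI_psd_face[OF _ R S R_S])
  show "psd (dK * dH) A" if "A \<in> C_set dK dH W n d m K0" for A using that unfolding C_set_def by blast
  fix A assume A: "A \<in> C_set dK dH W n d m K0" and A_S: "\<And>v. v \<in> S \<Longrightarrow> (A *\<^sub>v v) \<bullet>c v = 0"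
  obtain c where c: "A = c \<cdot>\<^sub>m Q" using on_ray[OF A A_S] by blast
  obtain c0 where c0: "R = c0 \<cdot>\<^sub>m Q" using on_ray[OF R R_S] by blast
  have traces: "ptrace_K dK dH A = ptrace_K dK dH R" using A R unfolding C_set_def by simp
  have "ptrace_K dK dH R \<noteq> 0\<^sub>m dH dH" using ptrace_K_psd_eq_0 R R_nz unfolding C_set_def by blast
  then show "A = R" using smult_eq_if_ptrace_K_eq[OF Q] traces unfolding c c0 by blast
qed

definition block_embed :: "nat \<Rightarrow> nat \<Rightarrow> 'a :: zero vec \<Rightarrow> 'a vec" where
  "block_embed N s x = vec N (\<lambda>i. if s \<le> i \<and> i < s + dim_vec x then x $ (i - s) else 0)"

lemma block_embed_carrier [simp]: "block_embed N s x \<in> carrier_vec N"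
  unfolding block_embed_def by simp

lemma dim_vec_block_embed [simp]: "dim_vec (block_embed N s x) = N"
  unfolding block_embed_def by simp

lemma block_embed_0_vec: "block_embed N s (0\<^sub>v n) = 0\<^sub>v N"
  unfolding block_embed_def by (rule eq_vecI) auto

lemma block_embed_0_eq_append: "x \<in> carrier_vec n1 \<Longrightarrow> block_embed (n1 + n2) 0 x = x @\<^sub>v 0\<^sub>v n2"
  unfolding block_embed_def by (rule eq_vecI) auto

lemma block_embed_shift_eq_append: "block_embed (n1 + n2) (n1 + s) x = 0\<^sub>v n1 @\<^sub>v block_embed n2 s x"
  unfolding block_embed_def by (rule eq_vecI) auto

lemma block_embed_block_embed:
  "dim_vec x \<le> n \<Longrightarrow> block_embed N s (block_embed n 0 x) = block_embed N s x"
  unfolding block_embed_def by (rule eq_vecI) auto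

lemma block_embed_cscalar_prod:
  fixes x y :: "complex vec"
  assumes le: "s + n \<le> N" and x: "x \<in> carrier_vec n" and y: "y \<in> carrier_vec n"
  shows "block_embed N s x \<bullet>c block_embed N s y = x \<bullet>c y"
proof -
  let ?f = "\<lambda>i. block_embed N s x $ i * cnj (block_embed N s y $ i)"
  have "block_embed N s x \<bullet>c block_embed N s y = sum ?f {0..<N}"
    unfolding scalar_prod_def by simp
  also have "\<dots> = sum ?f {s..<s + n}"
    by (rule sum.mono_neutral_right) (use le x y in \<open>auto simp: block_embed_def\<close>)
  also have "\<dots> = sum (\<lambda>b. ?f (b + s)) {0..<n}"
    using sum.shift_bounds_nat_ivl[of ?f 0 s n] by (simp add: add.commute)
  also have "\<dots> = x \<bullet>c y"
    using le x y unfolding scalar_prod_def block_embed_def by (intro sum.cong) auto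
  finally show ?thesis .
qed

lemma dim_kron [simp]:
  "dim_row (kron A B) = dim_row A * dim_row B" "dim_col (kron A B) = dim_col A * dim_col B"
  unfolding kron_def by simp_all

lemma kron_smult_right: "kron A (c \<cdot>\<^sub>m B) = c \<cdot>\<^sub>m kron A B"
proof (rule eq_matI)
  fix i j assume "i < dim_row (c \<cdot>\<^sub>m kron A B)" "j < dim_col (c \<cdot>\<^sub>m kron A B)"
  then have i: "i < dim_row A * dim_row B" and j: "j < dim_col A * dim_col B" by auto
  then have "i mod dim_row B < dim_row B" "j mod dim_col B < dim_col B"
    by (metis mod_less_divisor mult_0_right neq0_conv not_less_zero)+
  then show "kron A (c \<cdot>\<^sub>m B) $$ (i, j) = (c \<cdot>\<^sub>m kron A B) $$ (i, j)"
    using i j unfolding kron_def by simp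
qed simp_all

lemma kron_one_mat_Suc:
  assumes M: "M \<in> carrier_mat m m"
  shows "kron (1\<^sub>m (Suc d)) M = four_block_mat M (0\<^sub>m m (d * m)) (0\<^sub>m (d * m) m) (kron (1\<^sub>m d) M)"
proof (rule eq_matI)
  fix i j assume "i < dim_row (four_block_mat M (0\<^sub>m m (d * m)) (0\<^sub>m (d * m) m) (kron (1\<^sub>m d) M))"
    "j < dim_col (four_block_mat M (0\<^sub>m m (d * m)) (0\<^sub>m (d * m) m) (kron (1\<^sub>m d) M))"
  then have i: "i < m + d * m" and j: "j < m + d * m" using M by auto
  then have m: "0 < m" by (cases m) auto
  have div_less: "i div m < Suc d" "j div m < Suc d"
    "m \<le> i \<Longrightarrow> (i - m) div m < d" "m \<le> j \<Longrightarrow> (j - m) div m < d"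
    using i j by (auto intro!: less_mult_imp_div_less)
  show "kron (1\<^sub>m (Suc d)) M $$ (i, j) = four_block_mat M (0\<^sub>m m (d * m)) (0\<^sub>m (d * m) m) (kron (1\<^sub>m d) M) $$ (i, j)"
    using M i j m div_less by (auto simp: kron_def le_div_geq le_mod_geq)
qed (use M in auto)

lemma kron_one_mat_mult_block_embed:
  assumes M: "M \<in> carrier_mat m m" and d: "0 < d" and x: "x \<in> carrier_vec m"
  shows "kron (1\<^sub>m d) M *\<^sub>v block_embed (d * m) 0 x = block_embed (d * m) 0 (M *\<^sub>v x)"
proof -
  obtain d' where d': "d = Suc d'" using d by (cases d) auto
  have K: "kron (1\<^sub>m d') M \<in> carrier_mat (d' * m) (d' * m)" using M by (auto intro: carrier_matI)
  have "block_embed (m + d' * m) 0 x = x @\<^sub>v 0\<^sub>v (d' * m)" by (rule block_embed_0_eq_append[OF x])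
  moreover have "block_embed (m + d' * m) 0 (M *\<^sub>v x) = M *\<^sub>v x @\<^sub>v 0\<^sub>v (d' * m)"
    using M x by (intro block_embed_0_eq_append) auto
  ultimately show ?thesis
    unfolding d' kron_one_mat_Suc[OF M] mult_Suc
    using mult_mat_vec_split[OF M K x zero_carrier_vec] mult_mat_vec_zero[OF K] by simp
qed

lemma diag_block_mat_map_smult:
  "diag_block_mat (map (\<lambda>A. c \<cdot>\<^sub>m A) As) = c \<cdot>\<^sub>m diag_block_mat (As :: 'a :: semiring_0 mat list)"
proof (induction As)
  case Nil
  then show ?case by (auto intro: eq_matI)
next
  case (Cons A As)
  let ?D = "diag_block_mat As"
  have A: "A \<in> carrier_mat (dim_row A) (dim_col A)" and D: "?D \<in> carrier_mat (dim_row ?D) (dim_col ?D)"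
    by auto
  have "c \<cdot>\<^sub>m diag_block_mat (A # As) = four_block_mat (c \<cdot>\<^sub>m A) (c \<cdot>\<^sub>m 0\<^sub>m (dim_row A) (dim_col ?D))
      (c \<cdot>\<^sub>m 0\<^sub>m (dim_row ?D) (dim_col A)) (c \<cdot>\<^sub>m ?D)"
    by (simp add: Let_def smult_four_block_mat[OF A zero_carrier_mat zero_carrier_mat D])
  then show ?case using Cons.IH by (simp add: Let_def)
qed

lemma diag_block_mat_mult_block_embed:
  assumes "\<forall>A\<in>set As. square_mat A" and "k < length As" and "x \<in> carrier_vec (dim_row (As ! k))"
  shows "diag_block_mat As *\<^sub>v block_embed (sum_list (map dim_row As)) (sum_list (map dim_row (take k As))) x
    = block_embed (sum_list (map dim_row As)) (sum_list (map dim_row (take k As))) (As ! k *\<^sub>v x)"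
  using assms
proof (induction As arbitrary: k)
  case Nil
  then show ?case by simp
next
  case (Cons A As)
  define n1 n2 where "n1 = dim_row A" and "n2 = sum_list (map dim_row As)"
  have A: "A \<in> carrier_mat n1 n1" using Cons.prems(1) unfolding n1_def by (auto intro: carrier_matI)
  have D: "diag_block_mat As \<in> carrier_mat n2 n2"
    using Cons.prems(1) diag_block_mat_square[of As] dim_diag_block_mat[of As] unfolding n2_def
    by (auto intro: carrier_matI)
  have diag: "diag_block_mat (A # As) = four_block_mat A (0\<^sub>m n1 n2) (0\<^sub>m n2 n1) (diag_block_mat As)"
    using A D by (simp add: Let_def)
  show ?case
  proof (cases k)
    case 0
    then have x: "x \<in> carrier_vec n1" using Cons.prems(3) unfolding n1_def by simp
    show ?thesis
      unfolding diag 0 using mult_mat_vec_split[OF A D x zero_carrier_vec] A D x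
      by (simp add: n1_def[symmetric] n2_def[symmetric] block_embed_0_eq_append mult_mat_vec_zero)
  next
    case (Suc k')
    have IH: "diag_block_mat As *\<^sub>v block_embed n2 (sum_list (map dim_row (take k' As))) x
        = block_embed n2 (sum_list (map dim_row (take k' As))) (As ! k' *\<^sub>v x)"
      using Cons Suc unfolding n2_def by simp
    show ?thesis
      unfolding diag Suc
      using mult_mat_vec_split[OF A D zero_carrier_vec block_embed_carrier] A IH
      by (simp add: n1_def[symmetric] n2_def[symmetric] block_embed_shift_eq_append mult_mat_vec_zero)
  qed
qed

section \<open>Coordinates adapted to the isotypic decomposition\<close>

locale isotypic_basis =
  fixes N :: nat and W :: "complex mat" and n :: nat and d m :: "nat \<Rightarrow> nat"
  assumes W_carrier: "W \<in> carrier_mat N N" and W_isometry: "mat_adjoint W * W = 1\<^sub>m N"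
    and dim_sum: "(\<Sum>k<n. d k * m k) = N" and irrep_dim_pos: "\<And>k. k < n \<Longrightarrow> 0 < d k"
begin

definition offset :: "nat \<Rightarrow> nat" where
  "offset k = (\<Sum>l<k. d l * m l)"

text \<open>In the paper's notation, embed k x is the vector e1 (x) x of the summand H_k (x) C^(m k),
  written in the original basis of K (x) H.\<close>

definition embed :: "nat \<Rightarrow> complex vec \<Rightarrow> complex vec" where
  "embed k x = W *\<^sub>v block_embed N (offset k) x"

lemma embed_carrier [simp]: "embed k x \<in> carrier_vec N"
  unfolding embed_def using W_carrier by simp

lemma offset_block_le:
  assumes k: "k < n"
  shows "offset k + d k * m k \<le> N"
proof -
  have "offset k + d k * m k = (\<Sum>l<Suc k. d l * m l)" unfolding offset_def by simp
  also have "\<dots> \<le> (\<Sum>l<n. d l * m l)" by (rule sum_mono2) (use k in auto)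
  finally show ?thesis unfolding dim_sum .
qed

lemma irrep_copy_le: "k < n \<Longrightarrow> m k \<le> d k * m k"
  using irrep_dim_pos[of k] mult_le_mono1[of 1 "d k" "m k"] by simp

lemma offset_block_first_le: "k < n \<Longrightarrow> offset k + m k \<le> N"
  using offset_block_le[of k] irrep_copy_le[of k] by linarith

lemma adjoint_W_mult_W: "v \<in> carrier_vec N \<Longrightarrow> mat_adjoint W *\<^sub>v (W *\<^sub>v v) = v"
  using assoc_mult_mat_vec[OF mat_adjoint_carrier[OF W_carrier] W_carrier] W_isometry by simp

lemma embed_0_vec [simp]: "embed k (0\<^sub>v l) = 0\<^sub>v N"
  unfolding embed_def block_embed_0_vec using W_carrier by (rule mult_mat_vec_zero)

lemma embed_cscalar_prod:
  assumes k: "k < n" and x: "x \<in> carrier_vec (m k)" and y: "y \<in> carrier_vec (m k)"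
  shows "embed k x \<bullet>c embed k y = x \<bullet>c y"
proof -
  have "embed k x \<bullet>c embed k y
      = block_embed N (offset k) x \<bullet>c (mat_adjoint W *\<^sub>v (W *\<^sub>v block_embed N (offset k) y))"
    unfolding embed_def by (rule cscalar_prod_mat_adjoint[OF W_carrier]) (use W_carrier in auto)
  also have "\<dots> = block_embed N (offset k) x \<bullet>c block_embed N (offset k) y"
    by (simp add: adjoint_W_mult_W)
  also have "\<dots> = x \<bullet>c y" using block_embed_cscalar_prod offset_block_first_le[OF k] x y by blast
  finally show ?thesis .
qed

lemma embed_eq_0:
  assumes k: "k < n" and x: "x \<in> carrier_vec (m k)" and zero: "embed k x = 0\<^sub>v N"
  shows "x = 0\<^sub>v (m k)"
  using embed_cscalar_prod[OF k x x] x unfolding zero by simp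

definition block_mat :: "(nat \<Rightarrow> complex mat) \<Rightarrow> complex mat" where
  "block_mat M = diag_block_mat (map (\<lambda>k. kron (1\<^sub>m (d k)) (M k)) [0..<n])"

lemma comm_op_eq_block_mat: "comm_op W n d M = W * block_mat M * mat_adjoint W"
  unfolding comm_op_def block_mat_def ..

lemma block_mat_carrier:
  assumes M: "\<And>k. k < n \<Longrightarrow> M k \<in> carrier_mat (m k) (m k)"
  shows "block_mat M \<in> carrier_mat N N"
proof -
  have "dim_row (M k) = m k" "dim_col (M k) = m k" if "k < n" for k using M[OF that] by auto
  then have "sum_list (map (\<lambda>k. d k * dim_row (M k)) [0..<n]) = N"
    "sum_list (map (\<lambda>k. d k * dim_col (M k)) [0..<n]) = N"
    using dim_sum by (auto simp: sum_set_upt_conv_sum_list_nat[symmetric] atLeast0LessThan intro!: sum.cong)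
  then show ?thesis unfolding block_mat_def by (intro carrier_matI) (simp_all add: dim_diag_block_mat o_def)
qed

lemma comm_op_carrier:
  assumes M: "\<And>k. k < n \<Longrightarrow> M k \<in> carrier_mat (m k) (m k)"
  shows "comm_op W n d M \<in> carrier_mat N N"
  unfolding comm_op_eq_block_mat
  using W_carrier mat_adjoint_carrier[OF W_carrier] block_mat_carrier[OF M] by simp

lemma comm_op_mult_embed:
  assumes M: "\<And>k. k < n \<Longrightarrow> M k \<in> carrier_mat (m k) (m k)" and k: "k < n" and x: "x \<in> carrier_vec (m k)"
  shows "comm_op W n d M *\<^sub>v embed k x = embed k (M k *\<^sub>v x)"
proof -
  define As where "As = map (\<lambda>k. kron (1\<^sub>m (d k)) (M k)) [0..<n]"
  have D: "diag_block_mat As \<in> carrier_mat N N" using block_mat_carrier[OF M] unfolding block_mat_def As_def .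
  have "square_mat (kron (1\<^sub>m (d l)) (M l))" if "l < n" for l using M[OF that] by auto
  then have sq: "\<forall>A\<in>set As. square_mat A" unfolding As_def by auto
  have dims: "dim_row (M l) = m l" if "l < n" for l using M[OF that] by simp
  have total: "sum_list (map dim_row As) = N" and off: "sum_list (map dim_row (take k As)) = offset k"
    using k dims dim_sum unfolding As_def offset_def
    by (auto simp: o_def take_map sum_set_upt_conv_sum_list_nat[symmetric] atLeast0LessThan
        intro!: sum.cong)
  have len: "k < length As" using k unfolding As_def by simp
  have Ak: "As ! k = kron (1\<^sub>m (d k)) (M k)" using k unfolding As_def by simp
  have y: "block_embed (d k * m k) 0 x \<in> carrier_vec (dim_row (As ! k))" using M[OF k] unfolding Ak by simp
  have mk: "m k \<le> d k * m k" using irrep_copy_le[OF k] .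
  have "diag_block_mat As *\<^sub>v block_embed N (offset k) x
      = diag_block_mat As *\<^sub>v block_embed N (offset k) (block_embed (d k * m k) 0 x)"
    using block_embed_block_embed[of x "d k * m k"] mk x by simp
  also have "\<dots> = block_embed N (offset k) (As ! k *\<^sub>v block_embed (d k * m k) 0 x)"
    using diag_block_mat_mult_block_embed[OF sq len y] unfolding total off .
  also have "\<dots> = block_embed N (offset k) (block_embed (d k * m k) 0 (M k *\<^sub>v x))"
    unfolding Ak kron_one_mat_mult_block_embed[OF M[OF k] irrep_dim_pos[OF k] x] ..
  also have "\<dots> = block_embed N (offset k) (M k *\<^sub>v x)"
    using block_embed_block_embed[of "M k *\<^sub>v x" "d k * m k"] mk M[OF k] by simp
  finally have block: "diag_block_mat As *\<^sub>v block_embed N (offset k) x = block_embed N (offset k) (M k *\<^sub>v x)" .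
  have WD: "W * diag_block_mat As \<in> carrier_mat N N" using W_carrier D by simp
  have "comm_op W n d M *\<^sub>v embed k x
      = (W * diag_block_mat As) *\<^sub>v (mat_adjoint W *\<^sub>v (W *\<^sub>v block_embed N (offset k) x))"
    unfolding comm_op_eq_block_mat block_mat_def embed_def As_def[symmetric]
    by (rule assoc_mult_mat_vec[OF WD mat_adjoint_carrier[OF W_carrier]]) (use W_carrier in simp)
  also have "\<dots> = W *\<^sub>v (diag_block_mat As *\<^sub>v block_embed N (offset k) x)"
    unfolding adjoint_W_mult_W[OF block_embed_carrier] using W_carrier D by simp
  finally show ?thesis unfolding block embed_def .
qed

lemma comm_op_smult:
  assumes M: "\<And>k. k < n \<Longrightarrow> M k \<in> carrier_mat (m k) (m k)"
  shows "comm_op W n d (\<lambda>k. c \<cdot>\<^sub>m M k) = c \<cdot>\<^sub>m comm_op W n d M"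
proof -
  have "block_mat (\<lambda>k. c \<cdot>\<^sub>m M k) = c \<cdot>\<^sub>m block_mat M"
    unfolding block_mat_def kron_smult_right diag_block_mat_map_smult[symmetric] by (simp add: o_def)
  then show ?thesis
    unfolding comm_op_eq_block_mat
    using W_carrier mat_adjoint_carrier[OF W_carrier] block_mat_carrier[OF M]
    by (simp add: mult_smult_distrib[of _ N N _ N] mult_smult_assoc_mat[of _ N N _ N]
        assoc_mult_mat[of _ N N _ N _ N])
qed

lemma comm_op_cong:
  assumes "\<And>k. k < n \<Longrightarrow> M k = M' k"
  shows "comm_op W n d M = comm_op W n d M'"
proof -
  have blocks: "map (\<lambda>k. kron (1\<^sub>m (d k)) (M k)) [0..<n] = map (\<lambda>k. kron (1\<^sub>m (d k)) (M' k)) [0..<n]"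
    using assms by (intro map_cong) auto
  show ?thesis unfolding comm_op_def blocks ..
qed

lemma comm_op_eq_0_imp:
  assumes M: "\<And>k. k < n \<Longrightarrow> M k \<in> carrier_mat (m k) (m k)" and zero: "comm_op W n d M = 0\<^sub>m N N"
    and k: "k < n"
  shows "M k = 0\<^sub>m (m k) (m k)"
proof (rule eq_0_matI[OF M[OF k]])
  fix x :: "complex vec" assume x: "x \<in> carrier_vec (m k)"
  have "embed k (M k *\<^sub>v x) = 0\<^sub>v N"
    using comm_op_mult_embed[OF M k x] zero_mat_mult_vec[OF embed_carrier] unfolding zero by simp
  then show "M k *\<^sub>v x = 0\<^sub>v (m k)" using embed_eq_0[OF k] M[OF k] x by simp
qed

text \<open>On the first copy of the k-th summand the commutant element acts as M k, and embed k
  is isometric.\<close>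

lemma psd_comm_op_form_zero_block:
  assumes M: "\<And>k. k < n \<Longrightarrow> M k \<in> carrier_mat (m k) (m k)" and psd: "psd N (comm_op W n d M)"
    and k: "k < n" and x: "x \<in> carrier_vec (m k)"
    and zero: "(comm_op W n d M *\<^sub>v embed k x) \<bullet>c embed k x = 0"
  shows "M k *\<^sub>v x = 0\<^sub>v (m k)" and "\<And>y. y \<in> carrier_vec (m k) \<Longrightarrow> (M k *\<^sub>v y) \<bullet>c x = 0"
proof -
  have "embed k (M k *\<^sub>v x) = 0\<^sub>v N"
    using psd_form_zero_imp_kernel[OF psd embed_carrier zero] comm_op_mult_embed[OF M k x] by simp
  then show "M k *\<^sub>v x = 0\<^sub>v (m k)" using embed_eq_0[OF k] M[OF k] x by simp
  fix y :: "complex vec" assume y: "y \<in> carrier_vec (m k)"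
  have "(M k *\<^sub>v y) \<bullet>c x = embed k (M k *\<^sub>v y) \<bullet>c embed k x"
    using embed_cscalar_prod[OF k _ x] M[OF k] y by simp
  also have "\<dots> = 0"
    using psd_form_zero_orthogonal(1)[OF psd embed_carrier zero embed_carrier[of k y]] comm_op_mult_embed[OF M k y]
    by simp
  finally show "(M k *\<^sub>v y) \<bullet>c x = 0" .
qed

lemma psd_commutant_on_ray:
  assumes X: "\<And>k. k < n \<Longrightarrow> X k \<in> carrier_mat (m k) (m k)" and k0: "k0 < n"
    and X_other: "\<And>k. k < n \<Longrightarrow> k \<noteq> k0 \<Longrightarrow> X k = 0\<^sub>m (m k) (m k)"
    and w: "w \<in> carrier_vec (m k0)" "w \<noteq> 0\<^sub>v (m k0)"
    and X_kernel: "\<And>x. x \<in> carrier_vec (m k0) \<Longrightarrow> x \<bullet>c w = 0 \<Longrightarrow> X k0 *\<^sub>v x = 0\<^sub>v (m k0)"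
    and A: "A \<in> commutant W n d m" and psd_A: "psd N A"
    and zero_A: "\<And>v. v \<in> carrier_vec N \<Longrightarrow> comm_op W n d X *\<^sub>v v = 0\<^sub>v N \<Longrightarrow> (A *\<^sub>v v) \<bullet>c v = 0"
  obtains c where "A = c \<cdot>\<^sub>m comm_op W n d (\<lambda>k. if k = k0 then outer_mat w else 0\<^sub>m (m k) (m k))"
proof -
  obtain M where A_eq: "A = comm_op W n d M" and M: "\<And>k. k < n \<Longrightarrow> M k \<in> carrier_mat (m k) (m k)"
    using A unfolding commutant_def by blast
  note psd = psd_A[unfolded A_eq] and zero = zero_A[unfolded A_eq]
  have block_zero: "M k *\<^sub>v x = 0\<^sub>v (m k)" "\<And>y. y \<in> carrier_vec (m k) \<Longrightarrow> (M k *\<^sub>v y) \<bullet>c x = 0"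
    if k: "k < n" and x: "x \<in> carrier_vec (m k)" and Xx: "X k *\<^sub>v x = 0\<^sub>v (m k)" for k x
  proof -
    have "comm_op W n d X *\<^sub>v embed k x = 0\<^sub>v N"
      using comm_op_mult_embed[OF X k x] Xx by simp
    then have "(comm_op W n d M *\<^sub>v embed k x) \<bullet>c embed k x = 0" by (rule zero[OF embed_carrier])
    then show "M k *\<^sub>v x = 0\<^sub>v (m k)" "\<And>y. y \<in> carrier_vec (m k) \<Longrightarrow> (M k *\<^sub>v y) \<bullet>c x = 0"
      using psd_comm_op_form_zero_block[OF M psd k x] by blast+
  qed
  obtain c where c: "M k0 = c \<cdot>\<^sub>m outer_mat w"
  proof (rule mat_eq_smult_outer_mat[OF M[OF k0] w])
    show "M k0 *\<^sub>v x = 0\<^sub>v (m k0)" if "x \<in> carrier_vec (m k0)" "x \<bullet>c w = 0" for x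
      using block_zero(1)[OF k0] X_kernel that by blast
    show "(M k0 *\<^sub>v y) \<bullet>c x = 0" if "x \<in> carrier_vec (m k0)" "y \<in> carrier_vec (m k0)" "x \<bullet>c w = 0" for x y
      using block_zero(2)[OF k0] X_kernel that by blast
  qed
  have "M k = 0\<^sub>m (m k) (m k)" if "k < n" "k \<noteq> k0" for k
    using eq_0_matI[OF M[OF that(1)]] block_zero(1)[OF that(1)] X_other[OF that] zero_mat_mult_vec by metis
  then have "comm_op W n d M = comm_op W n d (\<lambda>k. c \<cdot>\<^sub>m (if k = k0 then outer_mat w else 0\<^sub>m (m k) (m k)))"
    using c by (intro comm_op_cong) auto
  also have "\<dots> = c \<cdot>\<^sub>m comm_op W n d (\<lambda>k. if k = k0 then outer_mat w else 0\<^sub>m (m k) (m k))"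
    using w by (intro comm_op_smult) (auto simp: outer_mat_def)
  finally show ?thesis using that A_eq by blast
qed

end

lemma isotypic_decomp_imp_isotypic_basis:
  assumes "isotypic_decomp G dK dH U V n d m p W"
  shows "isotypic_basis (dK * dH) W n d m"
  using assms unfolding isotypic_decomp_def isotypic_basis_def unitary_mat_def irreducible_rep_def by auto

theorem mainTheorem14:
  fixes G :: "('g,'b) monoid_scheme"
    and dH dK n :: nat and d m :: "nat \<Rightarrow> nat"
    and U V :: "'g \<Rightarrow> complex mat" and p :: "nat \<Rightarrow> 'g \<Rightarrow> complex mat"
    and W K0 R :: "complex mat" and X :: "nat \<Rightarrow> complex mat"
  assumes "group G"
    and "unitary_rep G dH U" and "unitary_rep G dK V"
    and "isotypic_decomp G dK dH U V n d m p W"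
    and "psd dH K0" and "psd dH (1\<^sub>m dH - K0)"
    and "\<forall>k<n. X k \<in> carrier_mat (m k) (m k)"
    and "\<exists>!k. k < n \<and> X k \<noteq> 0\<^sub>m (m k) (m k)"
    and "\<forall>k<n. X k \<noteq> 0\<^sub>m (m k) (m k) \<longrightarrow> vec_space.rank (m k) (X k) = 1"
    and "R = mat_adjoint (comm_op W n d X) * comm_op W n d X"
    and "R \<in> C_set dK dH W n d m K0"
  shows "extremal_in (C_set dK dH W n d m K0) R"
proof -
  interpret isotypic_basis "dK * dH" W n d m
    by (rule isotypic_decomp_imp_isotypic_basis[OF assms(4)])
  have X: "\<And>k. k < n \<Longrightarrow> X k \<in> carrier_mat (m k) (m k)" using assms(7) by blast
  obtain k0 where k0: "k0 < n" "X k0 \<noteq> 0\<^sub>m (m k0) (m k0)"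
    and X_other: "\<And>k. k < n \<Longrightarrow> k \<noteq> k0 \<Longrightarrow> X k = 0\<^sub>m (m k) (m k)"
    using assms(8) by blast
  obtain w where w: "w \<in> carrier_vec (m k0)" "w \<noteq> 0\<^sub>v (m k0)"
    and X_kernel: "\<And>x. x \<in> carrier_vec (m k0) \<Longrightarrow> x \<bullet>c w = 0 \<Longrightarrow> X k0 *\<^sub>v x = 0\<^sub>v (m k0)"
    using rank_one_mat_kernel[OF X[OF k0(1)] k0(2)] assms(9) k0 by blast
  define Z where "Z = comm_op W n d X"
  define S where "S = {v \<in> carrier_vec (dK * dH). Z *\<^sub>v v = 0\<^sub>v (dK * dH)}"
  define Q where "Q = comm_op W n d (\<lambda>k. if k = k0 then outer_mat w else 0\<^sub>m (m k) (m k))"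
  have Z: "Z \<in> carrier_mat (dK * dH) (dK * dH)" unfolding Z_def using comm_op_carrier[OF X] .
  show ?thesis
  proof (rule extremal_in_C_set_if_face_on_ray[OF assms(11), where S = S and Q = Q])
    show "R \<noteq> 0\<^sub>m (dK * dH) (dK * dH)"
      using mat_adjoint_mult_self_eq_0[OF Z] comm_op_eq_0_imp[OF X _ k0(1)] k0(2)
      unfolding assms(10) Z_def by blast
    show "(R *\<^sub>v v) \<bullet>c v = 0" if "v \<in> S" for v
      using that Z mat_adjoint_carrier[OF Z] unfolding assms(10) Z_def[symmetric] S_def
      by (simp add: mult_mat_vec_zero)
    show "Q \<in> carrier_mat (dK * dH) (dK * dH)"
      unfolding Q_def using w by (intro comm_op_carrier) (auto simp: outer_mat_def)
    show "\<exists>c. A = c \<cdot>\<^sub>m Q"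
      if "A \<in> C_set dK dH W n d m K0" and "\<And>v. v \<in> S \<Longrightarrow> (A *\<^sub>v v) \<bullet>c v = 0" for A
      using that psd_commutant_on_ray[OF X k0(1) X_other w X_kernel, of A]
      unfolding C_set_def S_def Z_def Q_def by blast
  qed (auto simp: S_def)
qed

end
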